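(* Let $V$ be a finite set and let $X$ be a real vector indexed by all subsets of $V$. Then $X$ satisfies $$\sum_{T\subseteq R}(-1)^{|R\setminus T|}X(T\cup Z)\le\begin{cases}1&\text{if }|R|=1,\\0&\text{otherwise,}\end{cases}\qquad\text{for all nonempty }R\subseteq V\text{ and all }Z\subseteq V\text{ with }Z\cap R=\emptyset,$$ if and only if it satisfies $$\sum_{T\subseteq R}(-1)^{|T|}\big(X(R\setminus T)-|R\setminus T|\big)\le0\qquad\text{for all nonempty }R\subseteq V.$$ *)

theory Defs
  imports Complex_Main
begin

end

theory Submission
  imports Defs
begin

text \<open>Write \<open>\<Delta>\<^sub>R F = \<Sum>\<^sub>T\<^sub>\<subseteq>\<^sub>R (-1)^|R - T| F(T)\<close> for the iterated finite difference of a set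
function. Adding one direction \<open>z\<close> to \<open>R\<close> gives \<open>\<Delta>\<^sub>R\<^sub>+\<^sub>z F = \<Delta>\<^sub>R (F(\<cdot> + z)) - \<Delta>\<^sub>R F\<close>. First, \<open>\<Delta>\<^sub>R |\<cdot>|\<close> is \<open>1\<close> for singletons and \<open>0\<close> for larger \<open>R\<close>,
and substituting \<open>T \<mapsto> R - T\<close> in the second system turns it into
\<open>\<Delta>\<^sub>R X \<le> \<Delta>\<^sub>R |\<cdot>|\<close>, which is the first system for \<open>Z = {}\<close>. Second, the recursion read as
\<open>\<Delta>\<^sub>R X(\<cdot> \<union> (Z + z)) = \<Delta>\<^sub>R\<^sub>+\<^sub>z X(\<cdot> \<union> Z) + \<Delta>\<^sub>R X(\<cdot> \<union> Z)\<close> lets the case \<open>Z = {}\<close> propagate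
to every \<open>Z\<close> by induction, since the bound for the nonsingleton \<open>R + z\<close> is \<open>0\<close>.\<close>

definition finite_difference :: "'a set \<Rightarrow> ('a set \<Rightarrow> 'b::comm_ring_1) \<Rightarrow> 'b" where
  "finite_difference R F = (\<Sum>T\<in>Pow R. (-1) ^ card (R - T) * F T)"

lemma finite_difference_insert:
  assumes "finite R" "z \<notin> R"
  shows "finite_difference (insert z R) F
       = finite_difference R (\<lambda>T. F (insert z T)) - finite_difference R F"
proof -
  have inj: "inj_on (insert z) (Pow R)"
    using assms(2) unfolding inj_on_def by (metis Diff_insert_absorb PowD subsetD)
  have disjoint: "Pow R \<inter> insert z ` Pow R = {}"
    using assms(2) by auto
  have without_z: "(-1) ^ card (insert z R - T) = - ((-1) ^ card (R - T) :: 'b)" if "T \<subseteq> R" for T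
  proof -
    have "insert z R - T = insert z (R - T)" "z \<notin> R - T"
      using that assms(2) by auto
    then show ?thesis
      using assms(1) by simp
  qed
  have with_z: "R - insert z T = R - T" for T
    using assms(2) by auto
  have "finite_difference (insert z R) F
      = (\<Sum>T\<in>Pow R. (-1) ^ card (insert z R - T) * F T)
        + (\<Sum>T\<in>insert z ` Pow R. (-1) ^ card (insert z R - T) * F T)"
    unfolding finite_difference_def Pow_insert
    using assms(1) disjoint by (simp add: sum.union_disjoint)
  also have "\<dots> = - finite_difference R F + finite_difference R (\<lambda>T. F (insert z T))"
    unfolding finite_difference_def
    by (simp add: sum.reindex[OF inj] without_z with_z sum_negf)
  finally show ?thesis
    by simp
qed

lemma finite_difference_const:
  assumes "finite R"
  shows "finite_difference R (\<lambda>_. c) = (if R = {} then c else 0)"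
  using assms
proof (induction R rule: finite_induct)
  case empty
  then show ?case
    by (simp add: finite_difference_def)
next
  case (insert z R)
  then show ?case
    by (simp add: finite_difference_insert)
qed

lemma finite_difference_card:
  assumes "finite R" "R \<noteq> {}"
  shows "finite_difference R (\<lambda>T. of_nat (card T)) = (if card R = 1 then 1 else 0)"
proof -
  obtain z R' where R: "R = insert z R'" "z \<notin> R'"
    using assms(2) by (metis Set.set_insert ex_in_conv)
  have "finite R'"
    using assms(1) R(1) by simp
  have card_insert: "of_nat (card (insert z T)) = of_nat (card T) + (1 :: 'b)" if "T \<subseteq> R'" for T
  proof -
    have "finite T" "z \<notin> T"
      using that R(2) \<open>finite R'\<close> finite_subset by auto
    then show ?thesis
      by simp
  qed
  have "finite_difference R' (\<lambda>T. of_nat (card (insert z T)) :: 'b)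
      = finite_difference R' (\<lambda>T. of_nat (card T) + 1)"
    unfolding finite_difference_def by (auto simp: card_insert intro!: sum.cong)
  then have "finite_difference R (\<lambda>T. of_nat (card T) :: 'b)
      = finite_difference R' (\<lambda>T. of_nat (card T) + 1) - finite_difference R' (\<lambda>T. of_nat (card T))"
    unfolding R(1) finite_difference_insert[OF \<open>finite R'\<close> R(2)] by simp
  also have "\<dots> = finite_difference R' (\<lambda>_. 1)"
    by (simp add: finite_difference_def distrib_left sum.distrib)
  also have "\<dots> = (if card R = 1 then 1 else 0)"
    using \<open>finite R'\<close> R by (simp add: finite_difference_const card_0_eq)
  finally show ?thesis .
qed

lemma finite_difference_complement:
  assumes "finite R"
  shows "finite_difference R F = (\<Sum>T\<in>Pow R. (-1) ^ card T * F (R - T))"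
proof -
  have bij: "bij_betw (\<lambda>T. R - T) (Pow R) (Pow R)"
    by (rule bij_betw_byWitness[where f' = "\<lambda>T. R - T"]) auto
  have "(\<Sum>T\<in>Pow R. (-1) ^ card T * F (R - T))
      = (\<Sum>T\<in>Pow R. (-1) ^ card (R - (R - T)) * F (R - T))"
    by (rule sum.cong) (auto simp: Diff_Diff_Int Int_absorb1)
  also have "\<dots> = finite_difference R F"
    unfolding finite_difference_def by (rule sum.reindex_bij_betw[OF bij])
  finally show ?thesis ..
qed

lemma alternating_sum_minus_card_eq:
  fixes X :: "'a set \<Rightarrow> real"
  assumes "finite R" "R \<noteq> {}"
  shows "(\<Sum>T\<in>Pow R. (-1) ^ card T * (X (R - T) - real (card (R - T))))
       = finite_difference R X - (if card R = 1 then 1 else 0)"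
  using finite_difference_complement[OF assms(1), of "\<lambda>T. X T - real (card T)"]
    finite_difference_card[OF assms, where 'b = real]
  by (simp add: finite_difference_def right_diff_distrib sum_subtractf)

lemma finite_difference_shift_le:
  fixes X :: "'a set \<Rightarrow> real"
  assumes "finite V"
    and base: "\<And>R. R \<subseteq> V \<Longrightarrow> R \<noteq> {} \<Longrightarrow> finite_difference R X \<le> (if card R = 1 then 1 else 0)"
    and "Z \<subseteq> V" "R \<subseteq> V" "R \<noteq> {}" "Z \<inter> R = {}"
  shows "finite_difference R (\<lambda>T. X (T \<union> Z)) \<le> (if card R = 1 then 1 else 0)"
proof -
  have "finite Z"
    using assms(1,3) finite_subset by blast
  then show ?thesis
    using assms(3-6)
  proof (induction Z arbitrary: R rule: finite_induct)
    case empty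
    then show ?case
      using base by simp
  next
    case (insert z Z)
    have "finite R"
      using assms(1) insert.prems(2) finite_subset by blast
    have "z \<notin> R"
      using insert.prems(4) by blast
    have "card (insert z R) \<noteq> 1"
      using \<open>finite R\<close> \<open>z \<notin> R\<close> \<open>R \<noteq> {}\<close> by simp
    then have step: "finite_difference (insert z R) (\<lambda>T. X (T \<union> Z)) \<le> 0"
      using insert.IH[of "insert z R"] insert.hyps(2) insert.prems by auto
    have "finite_difference R (\<lambda>T. X (T \<union> Z)) \<le> (if card R = 1 then 1 else 0)"
      using insert.IH insert.prems by auto
    with step show ?case
      using finite_difference_insert[OF \<open>finite R\<close> \<open>z \<notin> R\<close>, of "\<lambda>T. X (T \<union> Z)"]
      by simp
  qed
qed

theorem lemma6p1:
  fixes V :: "'a set" and X :: "'a set \<Rightarrow> real"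
  assumes "finite V"
  shows "(\<forall>R Z. R \<subseteq> V \<and> R \<noteq> {} \<and> Z \<subseteq> V \<and> Z \<inter> R = {} \<longrightarrow>
            (\<Sum>T\<in>Pow R. (-1) ^ card (R - T) * X (T \<union> Z))
              \<le> (if card R = 1 then 1 else 0))
       \<longleftrightarrow>
         (\<forall>R. R \<subseteq> V \<and> R \<noteq> {} \<longrightarrow>
            (\<Sum>T\<in>Pow R. (-1) ^ card T * (X (R - T) - real (card (R - T)))) \<le> 0)"
    (is "(\<forall>R Z. ?first R Z) \<longleftrightarrow> (\<forall>R. ?second R)")
proof -
  have second_iff: "?second R \<longleftrightarrow>
      (R \<subseteq> V \<and> R \<noteq> {} \<longrightarrow> finite_difference R X \<le> (if card R = 1 then 1 else 0))" for R
    using alternating_sum_minus_card_eq[OF finite_subset[OF _ assms], of R X] by auto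
  have first_iff: "?first R Z \<longleftrightarrow> (R \<subseteq> V \<and> R \<noteq> {} \<and> Z \<subseteq> V \<and> Z \<inter> R = {} \<longrightarrow>
      finite_difference R (\<lambda>T. X (T \<union> Z)) \<le> (if card R = 1 then 1 else 0))" for R Z
    by (simp only: finite_difference_def)
  show ?thesis
  proof
    assume "\<forall>R Z. ?first R Z"
    then have "?first R {}" for R
      by blast
    then show "\<forall>R. ?second R"
      unfolding first_iff second_iff by simp
  next
    assume "\<forall>R. ?second R"
    then have base: "finite_difference R X \<le> (if card R = 1 then 1 else 0)"
      if "R \<subseteq> V" "R \<noteq> {}" for R
      using that unfolding second_iff by blast
    show "\<forall>R Z. ?first R Z"
      unfolding first_iff using finite_difference_shift_le[OF assms base] by blast
  qed
qed

end
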